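(* Consider the linear model $\mathbf{Y} \mid \boldsymbol{\beta},\sigma^2 \sim N_n(\mathbf{X}\boldsymbol{\beta}, \sigma^2 \mathbf{I}_n)$ with $\mathbf{X}\in\mathbb{R}^{n\times p}$ fixed, and the conjugate global-local prior $$\beta_j \mid \sigma^2,\tau^2,\lambda_j^2 \sim N(0, \sigma^2\tau^2\lambda_j^2)\ \text{independently},\ j=1,\dots,p, \qquad \pi(\sigma^2)\propto \sigma^{-2},$$ with arbitrary priors on $\tau^2$ and $\lambda_1^2,\dots,\lambda_p^2$. Under this model, the conditional posterior mean of $\sigma^2$ is $$\mathbb{E}[\sigma^2 \mid \mathbf{Y}, \boldsymbol{\beta}, \tau^2, \lambda_1^2,\dots,\lambda_p^2] = \frac{\lVert \mathbf{Y} - \mathbf{X}\boldsymbol{\beta}\rVert^2 + \sum_{j=1}^p \beta_j^2/(\lambda_j^2\tau^2)}{n+p-2}.$$ Let $\boldsymbol{\beta}^*$ denote the true vector of regression coefficients, with $\lVert \boldsymbol{\beta}^*\rVert_0 = q$ and $\max_j \beta_j^{*2} = M_1$ for some constant $M_1\in\mathbb{R}$. Let $\sigma^* = \lVert \mathbf{Y} - \mathbf{X}\boldsymbol{\beta}^*\rVert/\sqrt{n}$ be the oracle estimator and suppose $\sigma^* = O(1)$. Suppose also that for every $j\in\{1,\dots,p\}$ with $\beta^*_j \neq 0$ we have $\tau^2\lambda_j^2 > M_2$ for some constant $M_2 \in \mathbb{R}$ (with $M_2>0$). Then $$\mathbb{E}[\sigma^2 \mid \mathbf{Y}, \boldsymbol{\beta}^*,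 \tau^2, \lambda_1^2,\dots,\lambda_p^2] \leq \frac{n\sigma^{*2}}{n+p-2} + \frac{q M_1/M_2}{n+p-2}.$$ In particular, as $p/n\to\infty$ and $q/p\to 0$, $$\mathbb{E}[\sigma^2 \mid \mathbf{Y}, \boldsymbol{\beta}^*, \tau^2, \lambda_1^2,\dots,\lambda_p^2] = o(1).$$
   Context: $\lVert\cdot\rVert_0$ denotes the number of nonzero entries and $\lVert\cdot\rVert$ the Euclidean norm. The conditional posterior mean is evaluated at $\boldsymbol{\beta}=\boldsymbol{\beta}^*$; terms with $\beta^*_j=0$ contribute zero to the sum. It is assumed $n+p>2$. *)

theory Defs
  imports Complex_Main "HOL-Library.Landau_Symbols"
begin

text \<open>Vectors are functions on nat with
  indices i < n (observations) and j < p (coefficients); the design matrix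
  is X :: nat => nat => real with entries X i j, i < n, j < p.\<close>

definition rss :: "nat \<Rightarrow> nat \<Rightarrow> (nat \<Rightarrow> nat \<Rightarrow> real) \<Rightarrow> (nat \<Rightarrow> real) \<Rightarrow> (nat \<Rightarrow> real) \<Rightarrow> real" where
  "rss n p X Y \<beta> = (\<Sum>i<n. (Y i - (\<Sum>j<p. X i j * \<beta> j))\<^sup>2)"

definition l0norm :: "nat \<Rightarrow> (nat \<Rightarrow> real) \<Rightarrow> nat" where
  "l0norm p \<beta> = card {j. j < p \<and> \<beta> j \<noteq> 0}"

definition sigma_star :: "nat \<Rightarrow> nat \<Rightarrow> (nat \<Rightarrow> nat \<Rightarrow> real) \<Rightarrow> (nat \<Rightarrow> real) \<Rightarrow> (nat \<Rightarrow> real) \<Rightarrow> real" where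
  "sigma_star n p X Y \<beta> = sqrt (rss n p X Y \<beta>) / sqrt (real n)"

text \<open>Conditional posterior mean E[sigma^2 | Y, beta, tau^2, lambda_1^2..lambda_p^2]
  under the conjugate global-local prior (closed form as given in the paper).
  tau2 is tau^2 and lam2 j is lambda_j^2.\<close>
definition post_mean_sigma2 ::
  "nat \<Rightarrow> nat \<Rightarrow> (nat \<Rightarrow> nat \<Rightarrow> real) \<Rightarrow> (nat \<Rightarrow> real) \<Rightarrow> (nat \<Rightarrow> real) \<Rightarrow> real \<Rightarrow> (nat \<Rightarrow> real) \<Rightarrow> real" where
  "post_mean_sigma2 n p X Y \<beta> tau2 lam2 =
     (rss n p X Y \<beta> + (\<Sum>j<p. (\<beta> j)\<^sup>2 / (lam2 j * tau2))) / (real n + real p - 2)"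

end

theory Submission
  imports Defs
begin

text \<open>The conditional posterior mean is (RSS + penalty)/(n + p - 2), and RSS = n sigma*^2 at
  the true coefficients. Each of the at most q nonzero penalty terms beta_j^2/(tau^2 lambda_j^2)
  is at most M1/M2, which gives the bound. Asymptotically, n/(n + p - 2) <= 2n/p tends to 0 and
  kills the bounded sigma*^2, while q/(n + p - 2) = (q/p) (p/(n + p - 2)) with q/p tending to 0
  and p/(n + p - 2) <= 2.\<close>

lemma rss_nonneg: "rss n p X Y \<beta> \<ge> 0"
  unfolding rss_def by (intro sum_nonneg) auto

lemma rss_eq_n_sigma_star_sq: "rss n p X Y \<beta> = real n * (sigma_star n p X Y \<beta>)\<^sup>2"
proof (cases "n = 0")
  case True
  then show ?thesis by (simp add: rss_def)
next
  case False
  then show ?thesis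
    using rss_nonneg[of n p X Y \<beta>] by (simp add: sigma_star_def power_divide)
qed

lemma penalty_nonneg:
  fixes tau2 :: real and lam2 \<beta> :: "nat \<Rightarrow> real"
  assumes "tau2 > 0" "\<forall>j<p. lam2 j > 0"
  shows "(\<Sum>j<p. (\<beta> j)\<^sup>2 / (lam2 j * tau2)) \<ge> 0"
  using assms by (intro sum_nonneg divide_nonneg_nonneg) auto

lemma penalty_le_l0norm:
  fixes tau2 M1 M2 :: real and lam2 \<beta> :: "nat \<Rightarrow> real"
  assumes "M2 > 0" "\<forall>j<p. (\<beta> j)\<^sup>2 \<le> M1"
    and "\<forall>j<p. \<beta> j \<noteq> 0 \<longrightarrow> tau2 * lam2 j > M2"
  shows "(\<Sum>j<p. (\<beta> j)\<^sup>2 / (lam2 j * tau2)) \<le> real (l0norm p \<beta>) * M1 / M2"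
proof -
  let ?S = "{j. j < p \<and> \<beta> j \<noteq> 0}"
  have "(\<Sum>j<p. (\<beta> j)\<^sup>2 / (lam2 j * tau2)) = (\<Sum>j\<in>?S. (\<beta> j)\<^sup>2 / (lam2 j * tau2))"
    by (rule sum.mono_neutral_right) auto
  also have "\<dots> \<le> (\<Sum>j\<in>?S. M1 / M2)"
  proof (rule sum_mono)
    fix j assume j: "j \<in> ?S"
    have "(\<beta> j)\<^sup>2 / (lam2 j * tau2) \<le> (\<beta> j)\<^sup>2 / M2"
      using assms(1,3) j by (intro divide_left_mono) (auto simp: mult.commute)
    also have "\<dots> \<le> M1 / M2"
      using assms(1,2) j by (simp add: divide_right_mono)
    finally show "(\<beta> j)\<^sup>2 / (lam2 j * tau2) \<le> M1 / M2" .
  qed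
  also have "\<dots> = real (l0norm p \<beta>) * M1 / M2"
    by (simp add: l0norm_def)
  finally show ?thesis .
qed

lemma post_mean_sigma2_nonneg:
  assumes "n + p > 2" "tau2 > 0" "\<forall>j<p. lam2 j > 0"
  shows "post_mean_sigma2 n p X Y \<beta> tau2 lam2 \<ge> 0"
  unfolding post_mean_sigma2_def using assms rss_nonneg penalty_nonneg
  by (intro divide_nonneg_pos add_nonneg_nonneg) auto

lemma post_mean_sigma2_le:
  assumes "n + p > 2" "M2 > 0" "\<forall>j<p. (\<beta> j)\<^sup>2 \<le> M1"
    and "\<forall>j<p. \<beta> j \<noteq> 0 \<longrightarrow> tau2 * lam2 j > M2"
  shows "post_mean_sigma2 n p X Y \<beta> tau2 lam2
          \<le> real n * (sigma_star n p X Y \<beta>)\<^sup>2 / (real n + real p - 2)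
             + real (l0norm p \<beta>) * M1 / M2 / (real n + real p - 2)"
proof -
  have "real n + real p - 2 > 0"
    using assms(1) by linarith
  then have "post_mean_sigma2 n p X Y \<beta> tau2 lam2
      \<le> (rss n p X Y \<beta> + real (l0norm p \<beta>) * M1 / M2) / (real n + real p - 2)"
    unfolding post_mean_sigma2_def using penalty_le_l0norm[OF assms(2-4)]
    by (intro divide_right_mono) auto
  then show ?thesis
    by (simp add: rss_eq_n_sigma_star_sq add_divide_distrib)
qed

lemma le_Max_sq_coeff:
  fixes \<beta> :: "nat \<Rightarrow> real"
  shows "\<forall>j<p. (\<beta> j)\<^sup>2 \<le> Max {(\<beta> j)\<^sup>2 | j. j < p}"
  by (auto intro: Max_ge)

lemma eventually_dof_ge_half_p:
  assumes "filterlim (\<lambda>k. real (p k) / real (n k)) at_top F"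
  shows "eventually (\<lambda>k. 0 < n k \<and> 2 * real (n k) \<le> real (p k)
                        \<and> real (p k) / 2 \<le> real (n k) + real (p k) - 2) F"
proof -
  have "eventually (\<lambda>k. 2 \<le> real (p k) / real (n k)) F"
    using assms by (simp add: filterlim_at_top)
  then show ?thesis
  proof eventually_elim
    case (elim k)
    then have "0 < n k"
      by (cases "n k = 0") auto
    moreover from this elim have "2 * real (n k) \<le> real (p k)"
      by (simp add: field_simps)
    ultimately show ?case
      by linarith
  qed
qed

lemma n_over_dof_tendsto_0:
  assumes "filterlim (\<lambda>k. real (p k) / real (n k)) at_top F"
  shows "((\<lambda>k. real (n k) / (real (n k) + real (p k) - 2)) \<longlongrightarrow> 0) F"
proof (rule tendsto_sandwich[where f = "\<lambda>_. 0" and h = "\<lambda>k. 2 * inverse (real (p k) / real (n k))"])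
  show "eventually (\<lambda>k. 0 \<le> real (n k) / (real (n k) + real (p k) - 2)) F"
    using eventually_dof_ge_half_p[OF assms] by eventually_elim auto
  show "eventually (\<lambda>k. real (n k) / (real (n k) + real (p k) - 2)
                        \<le> 2 * inverse (real (p k) / real (n k))) F"
    using eventually_dof_ge_half_p[OF assms]
  proof eventually_elim
    case (elim k)
    then have "real (n k) / (real (n k) + real (p k) - 2) \<le> real (n k) / (real (p k) / 2)"
      by (intro divide_left_mono) auto
    then show ?case
      by (simp add: field_simps)
  qed
  show "((\<lambda>k. 2 * inverse (real (p k) / real (n k))) \<longlongrightarrow> 0) F"
    using tendsto_mult_right_zero[OF tendsto_inverse_0_at_top[OF assms]] .
qed simp

lemma p_over_dof_bigo_1:
  assumes "filterlim (\<lambda>k. real (p k) / real (n k)) at_top F"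
  shows "(\<lambda>k. real (p k) / (real (n k) + real (p k) - 2)) \<in> O[F](\<lambda>_. 1)"
proof (rule bigoI[where c = 2])
  show "eventually (\<lambda>k. norm (real (p k) / (real (n k) + real (p k) - 2)) \<le> 2 * norm (1::real)) F"
    using eventually_dof_ge_half_p[OF assms]
    by eventually_elim (auto simp: field_simps)
qed

lemma post_mean_sigma2_smallo_1:
  fixes n p :: "nat \<Rightarrow> nat" and \<beta> lam2 :: "nat \<Rightarrow> nat \<Rightarrow> real"
  assumes "\<And>k. n k + p k > 2" "\<And>k. tau2 k > 0" "\<And>k. \<forall>j<p k. lam2 k j > 0"
    and "\<And>k. \<forall>j<p k. (\<beta> k j)\<^sup>2 \<le> M1" "\<And>k. \<forall>j<p k. \<beta> k j \<noteq> 0 \<longrightarrow> tau2 k * lam2 k j > M2"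
    and "M2 > 0"
    and p_over_n: "filterlim (\<lambda>k. real (p k) / real (n k)) at_top F"
    and sparse: "((\<lambda>k. real (l0norm (p k) (\<beta> k)) / real (p k)) \<longlongrightarrow> 0) F"
    and sigma_bounded: "(\<lambda>k. sigma_star (n k) (p k) (X k) (Y k) (\<beta> k)) \<in> O[F](\<lambda>_. 1)"
  shows "(\<lambda>k. post_mean_sigma2 (n k) (p k) (X k) (Y k) (\<beta> k) (tau2 k) (lam2 k)) \<in> o[F](\<lambda>_. 1)"
proof -
  define s where "s k = sigma_star (n k) (p k) (X k) (Y k) (\<beta> k)" for k
  define D where "D k = real (n k) + real (p k) - 2" for k
  define q where "q k = real (l0norm (p k) (\<beta> k)) / real (p k)" for k
  define bound where "bound k = s k * s k * (real (n k) / D k) + M1 / M2 * (q k * (real (p k) / D k))" for k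
  have n_over_D: "(\<lambda>k. real (n k) / D k) \<in> o[F](\<lambda>_. 1)"
    using n_over_dof_tendsto_0[OF p_over_n] by (intro smalloI_tendsto) (auto simp: D_def)
  have q_small: "q \<in> o[F](\<lambda>_. 1)"
    using sparse by (intro smalloI_tendsto) (auto simp: q_def)
  have "(\<lambda>k. s k * s k * (real (n k) / D k)) \<in> o[F](\<lambda>_. 1)"
    using landau_o.big_small_mult[OF landau_o.big_mult[OF sigma_bounded sigma_bounded] n_over_D]
    by (simp add: s_def)
  moreover have "(\<lambda>k. M1 / M2 * (q k * (real (p k) / D k))) \<in> o[F](\<lambda>_. 1)"
    using landau_o.big_small_mult[OF bigo_const[of "M1 / M2"]
          landau_o.small_big_mult[OF q_small p_over_dof_bigo_1[OF p_over_n]]]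
    by (simp add: D_def)
  ultimately have "bound \<in> o[F](\<lambda>_. 1)"
    unfolding bound_def by (rule sum_in_smallo)
  moreover have "(\<lambda>k. post_mean_sigma2 (n k) (p k) (X k) (Y k) (\<beta> k) (tau2 k) (lam2 k)) \<in> O[F](bound)"
  proof (rule bigoI[where c = 1])
    show "eventually (\<lambda>k. norm (post_mean_sigma2 (n k) (p k) (X k) (Y k) (\<beta> k) (tau2 k) (lam2 k))
                          \<le> 1 * norm (bound k)) F"
      using eventually_dof_ge_half_p[OF p_over_n]
    proof eventually_elim
      case (elim k)
      have "post_mean_sigma2 (n k) (p k) (X k) (Y k) (\<beta> k) (tau2 k) (lam2 k)
          \<le> real (n k) * (s k)\<^sup>2 / D k + real (l0norm (p k) (\<beta> k)) * M1 / M2 / D k"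
        using post_mean_sigma2_le[OF assms(1,6,4,5)] by (simp add: s_def D_def)
      also have "\<dots> = bound k"
        using elim by (simp add: bound_def q_def D_def power2_eq_square field_simps)
      finally have "post_mean_sigma2 (n k) (p k) (X k) (Y k) (\<beta> k) (tau2 k) (lam2 k) \<le> bound k" .
      then show ?case
        using post_mean_sigma2_nonneg[OF assms(1-3)] by simp
    qed
  qed
  ultimately show ?thesis
    using landau_o.big_small_trans by blast
qed

theorem proposition3:
  shows
  "(\<forall>(n::nat) (p::nat) (X::nat \<Rightarrow> nat \<Rightarrow> real) (Y::nat \<Rightarrow> real) (\<beta>::nat \<Rightarrow> real)
       (tau2::real) (lam2::nat \<Rightarrow> real) (M1::real) (M2::real).
      n + p > 2 \<and> tau2 > 0 \<and> (\<forall>j<p. lam2 j > 0) \<and> M2 > 0 \<and>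
      M1 = Max {(\<beta> j)\<^sup>2 | j. j < p} \<and>
      (\<forall>j<p. \<beta> j \<noteq> 0 \<longrightarrow> tau2 * lam2 j > M2)
      \<longrightarrow> post_mean_sigma2 n p X Y \<beta> tau2 lam2
          \<le> real n * (sigma_star n p X Y \<beta>)\<^sup>2 / (real n + real p - 2)
             + real (l0norm p \<beta>) * M1 / M2 / (real n + real p - 2))
   \<and>
   (\<forall>(n::nat \<Rightarrow> nat) (p::nat \<Rightarrow> nat) (X::nat \<Rightarrow> nat \<Rightarrow> nat \<Rightarrow> real) (Y::nat \<Rightarrow> nat \<Rightarrow> real)
       (\<beta>::nat \<Rightarrow> nat \<Rightarrow> real) (tau2::nat \<Rightarrow> real) (lam2::nat \<Rightarrow> nat \<Rightarrow> real) (M1::real) (M2::real).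
      (\<forall>k. n k + p k > 2 \<and> tau2 k > 0 \<and> (\<forall>j<p k. lam2 k j > 0) \<and>
           M1 = Max {(\<beta> k j)\<^sup>2 | j. j < p k} \<and>
           (\<forall>j<p k. \<beta> k j \<noteq> 0 \<longrightarrow> tau2 k * lam2 k j > M2)) \<and>
      M2 > 0 \<and>
      filterlim (\<lambda>k. real (p k) / real (n k)) at_top sequentially \<and>
      ((\<lambda>k. real (l0norm (p k) (\<beta> k)) / real (p k)) \<longlongrightarrow> 0) sequentially \<and>
      (\<lambda>k. sigma_star (n k) (p k) (X k) (Y k) (\<beta> k)) \<in> O(\<lambda>_. 1)
      \<longrightarrow> (\<lambda>k. post_mean_sigma2 (n k) (p k) (X k) (Y k) (\<beta> k) (tau2 k) (lam2 k)) \<in> o(\<lambda>_. 1))"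
proof (intro conjI allI impI; elim conjE)
  show "post_mean_sigma2 n p X Y \<beta> tau2 lam2
          \<le> real n * (sigma_star n p X Y \<beta>)\<^sup>2 / (real n + real p - 2)
             + real (l0norm p \<beta>) * M1 / M2 / (real n + real p - 2)"
    if "n + p > 2" "M2 > 0" "M1 = Max {(\<beta> j)\<^sup>2 | j. j < p}"
      and "\<forall>j<p. \<beta> j \<noteq> 0 \<longrightarrow> tau2 * lam2 j > M2"
    for n p :: nat and X Y \<beta> tau2 lam2 M1 M2
    using post_mean_sigma2_le[OF that(1,2) _ that(4)] le_Max_sq_coeff that(3) by blast
next
  fix n p :: "nat \<Rightarrow> nat" and X Y \<beta> tau2 lam2 and M1 M2 :: real
  assume hyps: "\<forall>k. n k + p k > 2 \<and> tau2 k > 0 \<and> (\<forall>j<p k. lam2 k j > 0) \<and>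
           M1 = Max {(\<beta> k j)\<^sup>2 | j. j < p k} \<and>
           (\<forall>j<p k. \<beta> k j \<noteq> 0 \<longrightarrow> tau2 k * lam2 k j > M2)"
    and M2_pos: "M2 > 0"
    and asymptotics: "filterlim (\<lambda>k. real (p k) / real (n k)) at_top sequentially"
      "((\<lambda>k. real (l0norm (p k) (\<beta> k)) / real (p k)) \<longlongrightarrow> 0) sequentially"
      "(\<lambda>k. sigma_star (n k) (p k) (X k) (Y k) (\<beta> k)) \<in> O(\<lambda>_. 1)"
  have "\<forall>j<p k. (\<beta> k j)\<^sup>2 \<le> M1" for k
    using spec[OF hyps, of k] le_Max_sq_coeff[of "p k" "\<beta> k"] by simp
  then show "(\<lambda>k. post_mean_sigma2 (n k) (p k) (X k) (Y k) (\<beta> k) (tau2 k) (lam2 k)) \<in> o(\<lambda>_. 1)"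
    using hyps by (intro post_mean_sigma2_smallo_1[OF _ _ _ _ _ M2_pos asymptotics]) blast+
qed

end
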